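(* In the reset-button collector with equal standard probabilities $p_{i,n}=q_n/n$ for $1\le i\le n$, assume $\rho_nn\log n\to0$. Then for every $y\in\mathbb R$, $\mathbb P(T_n\le n\log n+ny)\to\exp(-e^{-y})$; equivalently $(T_n-n\log n)/n\Rightarrow G$ with $\mathbb P(G\le y)=\exp(-e^{-y})$.
   Context: Reset-button collector: fix $n\ge1$. There are standard coupons $1,\dots,n$ and a reset coupon. At each discrete time $t=1,2,\dots$ one coupon is sampled independently: the reset coupon with probability $\rho_n\in(0,1)$, standard coupon $i$ with probability $p_{i,n}$, where $\sum_ip_{i,n}=q_n:=1-\rho_n$. Starting from the empty collection, drawn standard coupons are added; a reset empties the collection and collecting continues. $T_n$ is the first time all $n$ standard coupons are present. *)

theory Defs
  imports Complex_Main
begin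

text \<open>Reset-button collector. Coupons are encoded as natural numbers:
  0 is the reset coupon, 1..n are the standard coupons.
  A run of length t is a list of draws in {0..n}.\<close>

definition collect_step :: "nat set \<Rightarrow> nat \<Rightarrow> nat set" where
  "collect_step S c = (if c = 0 then {} else insert c S)"

definition collection :: "nat list \<Rightarrow> nat set" where
  "collection w = foldl collect_step {} w"

definition draw_prob :: "real \<Rightarrow> (nat \<Rightarrow> real) \<Rightarrow> nat \<Rightarrow> real" where
  "draw_prob rho p c = (if c = 0 then rho else p c)"

text \<open>The event T_n \<le> t: among the first t draws, at some time k \<le> t all n standard
  coupons are present.\<close>
definition completes_by :: "nat \<Rightarrow> nat \<Rightarrow> nat list \<Rightarrow> bool" where
  "completes_by n t w = (\<exists>k\<le>t. collection (take k w) = {1..n})"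

text \<open>P(T_n \<le> t), computed as the probability of the event over the first t i.i.d. draws.\<close>
definition reset_cdf :: "nat \<Rightarrow> real \<Rightarrow> (nat \<Rightarrow> real) \<Rightarrow> nat \<Rightarrow> real" where
  "reset_cdf n rho p t =
     (\<Sum>w\<in>{w. set w \<subseteq> {0..n} \<and> length w = t \<and> completes_by n t w}.
        \<Prod>c\<leftarrow>w. draw_prob rho p c)"

end

theory Submission
  imports Defs "HOL-Analysis.Analysis" "HOL-Real_Asymp.Real_Asymp"
begin

text \<open>If no reset occurs among the first \<open>t\<close> draws, the process is the classical coupon
  collector with \<open>n\<close> equally likely coupons, and it has completed by time \<open>t\<close> iff the word of
  draws is surjective onto \<open>{1..n}\<close>. By inclusion-exclusion this has probability
  \<open>\<Sum>k\<le>n. (-1)^k (n choose k) (1 - k/n)^t\<close>; at \<open>t \<approx> n ln n + n y\<close> the \<open>k\<close>-th term tends to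
  \<open>(-e^(-y))^k / k!\<close> and is dominated by \<open>e^(k(1-y)) / k!\<close>, so by Tannery's theorem the sum tends
  to \<open>exp (-e^(-y))\<close>. A reset occurs among the first \<open>t\<close> draws with probability at most
  \<open>1 - (1-\<rho>)^t \<le> \<rho> t \<approx> \<rho> n ln n \<rightarrow> 0\<close>, which changes the distribution function by at most that
  much.\<close>

lemma sum_prod_list_lists_length:
  fixes f :: "'a \<Rightarrow> 'b::comm_semiring_1"
  assumes "finite A"
  shows "(\<Sum>w\<in>{w. set w \<subseteq> A \<and> length w = t}. prod_list (map f w)) = sum f A ^ t"
proof (induction t)
  case 0
  have "{w. set w \<subseteq> A \<and> length w = 0} = {[]}" by auto
  then show ?case by simp
next
  case (Suc t)
  let ?L = "{w. set w \<subseteq> A \<and> length w = t}"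
  have "(\<Sum>w\<in>{w. set w \<subseteq> A \<and> length w = Suc t}. prod_list (map f w))
      = (\<Sum>(w, x)\<in>?L \<times> A. f x * prod_list (map f w))"
    unfolding lists_length_Suc_eq
    by (subst sum.reindex) (auto simp: inj_on_def split_def)
  also have "\<dots> = (\<Sum>w\<in>?L. prod_list (map f w)) * sum f A"
    by (simp add: sum.cartesian_product[symmetric] sum_product sum.swap[of _ A] mult.commute)
  finally show ?case using Suc by (simp add: mult.commute)
qed

lemma collection_eq_set: "0 \<notin> set w \<Longrightarrow> collection w = set w"
proof -
  have "0 \<notin> set w \<Longrightarrow> foldl collect_step S w = S \<union> set w" for S
    by (induction w arbitrary: S) (auto simp: collect_step_def)
  then show "0 \<notin> set w \<Longrightarrow> collection w = set w"
    by (simp add: collection_def)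
qed

lemma completes_by_iff_set_eq:
  assumes "set w \<subseteq> {1..n}" "length w = t"
  shows "completes_by n t w \<longleftrightarrow> set w = {1..n}"
proof
  assume "completes_by n t w"
  then obtain k where "collection (take k w) = {1..n}"
    unfolding completes_by_def by blast
  moreover have "0 \<notin> set (take k w)"
    using assms(1) in_set_takeD by fastforce
  ultimately have "{1..n} \<subseteq> set w"
    using collection_eq_set set_take_subset by metis
  then show "set w = {1..n}" using assms(1) by blast
next
  assume "set w = {1..n}"
  then show "completes_by n t w"
    using assms(2) collection_eq_set[of w] unfolding completes_by_def by force
qed

definition coupon_cdf :: "nat \<Rightarrow> nat \<Rightarrow> real" where
  "coupon_cdf n t = real (card {w. set w = {1..n} \<and> length w = t}) / real n ^ t"

lemma reset_cdf_bounds: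
  assumes n: "n \<ge> 1" and rho: "0 \<le> rho" "rho \<le> 1"
  defines "q \<equiv> 1 - rho"
  shows "q ^ t * coupon_cdf n t \<le> reset_cdf n rho (\<lambda>i. q / real n) t"
    and "reset_cdf n rho (\<lambda>i. q / real n) t \<le> q ^ t * coupon_cdf n t + (1 - q ^ t)"
proof -
  define P where "P w = (\<Prod>c\<leftarrow>w. draw_prob rho (\<lambda>i. q / real n) c)" for w
  define X where "X = {w. set w \<subseteq> {0..n} \<and> length w = t \<and> completes_by n t w}"
  define W where "W = {w. set w \<subseteq> {0..n} \<and> length w = t}"
  define R where "R = {w. set w \<subseteq> {1..n} \<and> length w = t}"
  define A where "A = {w. set w = {1..n} \<and> length w = t}"
  have finW: "finite W"
    unfolding W_def by (simp add: finite_lists_length_eq)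
  have XW: "X \<subseteq> W" and RW: "R \<subseteq> W"
    unfolding X_def W_def R_def by auto
  have P_nonneg: "0 \<le> P w" for w
    using rho unfolding P_def q_def by (intro prod_list_nonneg) (auto simp: draw_prob_def)
  have standard: "(\<Sum>c\<in>{1..n}. draw_prob rho (\<lambda>i. q / real n) c) = q"
    using n by (simp add: draw_prob_def)
  have "(\<Sum>c\<in>{0..n}. draw_prob rho (\<lambda>i. q / real n) c) = rho + q"
    using standard by (simp add: sum.atLeast_Suc_atMost draw_prob_def)
  then have sum_W: "sum P W = 1"
    unfolding P_def W_def q_def by (simp add: sum_prod_list_lists_length)
  have sum_R: "sum P R = q ^ t"
    unfolding P_def R_def by (simp only: sum_prod_list_lists_length finite_atLeastAtMost standard)
  have XR: "X \<inter> R = A"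
    unfolding X_def R_def A_def using completes_by_iff_set_eq by fastforce
  have "P w = (q / real n) ^ t" if "w \<in> A" for w
  proof -
    have "map (draw_prob rho (\<lambda>i. q / real n)) w = map (\<lambda>_. q / real n) w"
      using that unfolding A_def by (intro map_cong) (auto simp: draw_prob_def)
    then show ?thesis
      using that unfolding P_def A_def by (simp add: map_replicate_const)
  qed
  then have sum_A: "sum P A = q ^ t * coupon_cdf n t"
    unfolding coupon_cdf_def A_def[symmetric] by (simp add: power_divide)
  have reset: "sum P (X - R) \<le> 1 - q ^ t"
  proof -
    have "sum P (X - R) \<le> sum P (W - R)"
      using XW finW P_nonneg by (intro sum_mono2) auto
    also have "\<dots> = 1 - q ^ t"
      using RW finW sum_W sum_R by (simp add: sum_diff)
    finally show ?thesis .
  qed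
  have "reset_cdf n rho (\<lambda>i. q / real n) t = sum P A + sum P (X - R)"
    unfolding reset_cdf_def P_def X_def[symmetric] XR[symmetric]
    using finite_subset[OF XW finW] by (rule sum.Int_Diff)
  then show "q ^ t * coupon_cdf n t \<le> reset_cdf n rho (\<lambda>i. q / real n) t"
    and "reset_cdf n rho (\<lambda>i. q / real n) t \<le> q ^ t * coupon_cdf n t + (1 - q ^ t)"
    using sum_A reset P_nonneg by (auto intro: sum_nonneg)
qed

lemma card_lists_length_eq_sum_card_set_eq:
  assumes "finite S"
  shows "card S ^ t = (\<Sum>U\<in>Pow S. card {w. set w = U \<and> length w = t})"
proof -
  let ?L = "{w. set w \<subseteq> S \<and> length w = t}"
  have "card S ^ t = (\<Sum>w\<in>?L. 1)"
    using assms by (simp add: card_lists_length_eq)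
  also have "\<dots> = (\<Sum>U\<in>Pow S. \<Sum>w\<in>{w\<in>?L. set w = U}. 1)"
    using assms finite_lists_length_eq[OF assms] by (intro sum.group[symmetric]) auto
  also have "\<dots> = (\<Sum>U\<in>Pow S. card {w. set w = U \<and> length w = t})"
    by (intro sum.cong refl) (auto intro: arg_cong[where f = card])
  finally show ?thesis .
qed

lemma card_lists_set_eq:
  assumes "finite S"
  shows "real (card {w. set w = S \<and> length w = t})
       = (\<Sum>k\<le>card S. (-1) ^ k * real (card S choose k) * real (card S - k) ^ t)"
proof -
  let ?n = "card S"
  have "real (card {w. set w = S \<and> length w = t})
      = (\<Sum>U\<in>Pow S. (-1) ^ (?n - card U) * real (card U) ^ t)"
    using card_lists_length_eq_sum_card_set_eq[of _ t, THEN arg_cong[where f = real]]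
    by (intro inclusion_exclusion_mobius[OF _ assms]) simp
  also have "\<dots> = (\<Sum>j\<le>?n. \<Sum>U\<in>{U\<in>Pow S. card U = j}. (-1) ^ (?n - card U) * real (card U) ^ t)"
    using assms by (intro sum.group[symmetric]) (auto simp: card_mono)
  also have "\<dots> = (\<Sum>j\<le>?n. real (?n choose j) * ((-1) ^ (?n - j) * real j ^ t))"
  proof (intro sum.cong refl)
    fix j
    have "{U\<in>Pow S. card U = j} = {U. U \<subseteq> S \<and> card U = j}" by auto
    then show "(\<Sum>U\<in>{U\<in>Pow S. card U = j}. (-1) ^ (?n - card U) * real (card U) ^ t)
        = real (?n choose j) * ((-1) ^ (?n - j) * real j ^ t)"
      using n_subsets[OF assms, of j] by simp
  qed
  also have "\<dots> = (\<Sum>k\<le>?n. (-1) ^ k * real (?n choose k) * real (?n - k) ^ t)"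
    by (rule sum.reindex_bij_witness[where i = "\<lambda>k. ?n - k" and j = "\<lambda>j. ?n - j"])
       (auto simp: binomial_symmetric[symmetric])
  finally show ?thesis .
qed

lemma coupon_cdf_eq_sum:
  assumes "n \<ge> 1"
  shows "coupon_cdf n t = (\<Sum>k\<le>n. (-1) ^ k * real (n choose k) * (1 - real k / real n) ^ t)"
proof -
  have "coupon_cdf n t = (\<Sum>k\<le>n. (-1) ^ k * real (n choose k) * (real (n - k) / real n) ^ t)"
    using card_lists_set_eq[of "{1..n}" t]
    by (simp add: coupon_cdf_def sum_divide_distrib power_divide)
  also have "\<dots> = (\<Sum>k\<le>n. (-1) ^ k * real (n choose k) * (1 - real k / real n) ^ t)"
    using assms by (intro sum.cong refl) (simp add: of_nat_diff field_simps)
  finally show ?thesis .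
qed

lemma binomial_over_power_tendsto: "(\<lambda>n. real (n choose k) / real n ^ k) \<longlonglongrightarrow> 1 / fact k"
proof -
  have "(\<lambda>n. (\<Prod>i<k. (real n - real i) / real n) / fact k) \<longlonglongrightarrow> (\<Prod>i<k. 1) / fact k"
  proof (intro tendsto_divide tendsto_prod tendsto_const)
    show "(\<lambda>n. (real n - real i) / real n) \<longlonglongrightarrow> 1" for i
      by real_asymp
  qed simp
  moreover have "(\<Prod>i<k. (real n - real i) / real n) / fact k = real (n choose k) / real n ^ k" for n
  proof -
    have "real (n choose k) * fact k = (\<Prod>i<k. real n - real i)"
      by (simp add: binomial_gbinomial gbinomial_mult_fact' atLeast0LessThan)
    then have "real (n choose k) = (\<Prod>i<k. real n - real i) / fact k"
      by (simp add: field_simps)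
    then show ?thesis
      by (simp add: prod_dividef)
  qed
  ultimately show ?thesis by simp
qed

lemma coupon_term_abs_le:
  assumes "n \<ge> 1" and "ln (real n) - real t / real n \<le> c"
  shows "\<bar>(-1) ^ k * real (n choose k) * (1 - real k / real n) ^ t\<bar> \<le> exp c ^ k / fact k"
proof (cases "k \<le> n")
  case False
  then show ?thesis by (simp add: binomial_eq_0)
next
  case True
  have n: "real n > 0" using assms(1) by simp
  have x0: "0 \<le> 1 - real k / real n" using True n by (simp add: field_simps)
  have "\<bar>(-1) ^ k * real (n choose k) * (1 - real k / real n) ^ t\<bar>
      = real (n choose k) * (1 - real k / real n) ^ t"
    using x0 by (simp add: abs_mult)
  also have "\<dots> \<le> real n ^ k / fact k * exp (- real k / real n) ^ t"
  proof (intro mult_mono power_mono)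
    have "real ((n choose k) * fact k) \<le> real (n ^ k)"
      by (simp only: of_nat_le_iff binomial_fact_pow)
    then show "real (n choose k) \<le> real n ^ k / fact k"
      by (simp add: field_simps)
  qed (use x0 exp_ge_add_one_self[of "- real k / real n"] in auto)
  also have "\<dots> = exp (real k * ln (real n)) * exp (real t * (- real k / real n)) / fact k"
    by (subst (1 2) exp_of_nat_mult) (use n in simp)
  also have "\<dots> = exp (real k * (ln (real n) - real t / real n)) / fact k"
    using n by (simp add: mult_exp_exp field_simps)
  also have "\<dots> \<le> exp (real k * c) / fact k"
    using assms(2) by (intro divide_right_mono exp_le_cancel_iff[THEN iffD2] mult_left_mono) auto
  also have "\<dots> = exp c ^ k / fact k"
    by (simp add: exp_of_nat_mult)
  finally show ?thesis .
qed

context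
  fixes T :: "nat \<Rightarrow> nat" and y :: real
  assumes T_asymp: "(\<lambda>n. real (T n) / real n - ln (real n)) \<longlonglongrightarrow> y"
begin

lemma power_mult_one_minus_power_tendsto:
  "(\<lambda>n. real n ^ k * (1 - real k / real n) ^ T n) \<longlonglongrightarrow> exp (- y) ^ k"
proof -
  define s where "s n = real (T n) / real n - ln (real n)" for n
  txt \<open>\<open>e n\<close> is the logarithm of the sequence, split via \<open>T n = n ln n + n s n\<close> into two
    parts whose limits are explicit.\<close>
  define e where "e n = real k * ln (real n) + real n * ln (real n) * ln (1 - real k / real n)
    + s n * (real n * ln (1 - real k / real n))" for n
  have "(\<lambda>n. real k * ln (real n) + real n * ln (real n) * ln (1 - real k / real n)) \<longlonglongrightarrow> 0"
    by real_asymp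
  moreover have "(\<lambda>n. real n * ln (1 - real k / real n)) \<longlonglongrightarrow> - real k"
    by real_asymp
  ultimately have "e \<longlonglongrightarrow> 0 + y * - real k"
    unfolding e_def s_def by (intro tendsto_add tendsto_mult T_asymp)
  then have "(\<lambda>n. exp (e n)) \<longlonglongrightarrow> exp (- y) ^ k"
    by (auto intro: tendsto_eq_intros simp flip: exp_of_nat_mult)
  moreover have "eventually (\<lambda>n. exp (e n) = real n ^ k * (1 - real k / real n) ^ T n) sequentially"
    using eventually_gt_at_top[of k]
  proof eventually_elim
    case (elim n)
    then have n: "real n > 0" and pos: "1 - real k / real n > 0"
      by (auto simp: field_simps)
    have "real (T n) = real n * ln (real n) + s n * real n"
      using n by (simp add: s_def field_simps)
    then have "e n = real k * ln (real n) + real (T n) * ln (1 - real k / real n)"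
      by (simp add: e_def algebra_simps)
    then show ?case
      using n pos by (simp add: exp_add exp_of_nat_mult)
  qed
  ultimately show ?thesis
    by (rule Lim_transform_eventually)
qed

lemma coupon_term_tendsto:
  "(\<lambda>n. (-1) ^ k * real (n choose k) * (1 - real k / real n) ^ T n)
     \<longlonglongrightarrow> (- exp (- y)) ^ k / fact k"
proof -
  have "(\<lambda>n. (-1) ^ k * (real (n choose k) / real n ^ k) * (real n ^ k * (1 - real k / real n) ^ T n))
      \<longlonglongrightarrow> (-1) ^ k * (1 / fact k) * exp (- y) ^ k"
    by (intro tendsto_mult tendsto_const binomial_over_power_tendsto power_mult_one_minus_power_tendsto)
  moreover have "eventually (\<lambda>n. (-1) ^ k * (real (n choose k) / real n ^ k)
      * (real n ^ k * (1 - real k / real n) ^ T n)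
      = (-1) ^ k * real (n choose k) * (1 - real k / real n) ^ T n) sequentially"
    using eventually_gt_at_top[of 0] by eventually_elim simp
  ultimately show ?thesis
    by (auto dest: Lim_transform_eventually simp: power_minus')
qed

lemma coupon_cdf_tendsto_gumbel: "(\<lambda>n. coupon_cdf n (T n)) \<longlonglongrightarrow> exp (- exp (- y))"
proof -
  define a where "a k n = (-1) ^ k * real (n choose k) * (1 - real k / real n) ^ T n" for k n
  have a_lim: "(\<lambda>n. a k n) \<longlonglongrightarrow> (- exp (- y)) ^ k / fact k" for k
    unfolding a_def by (rule coupon_term_tendsto)
  define M where "M k = exp (1 - y) ^ k / fact k" for k
  have "eventually (\<lambda>n. y - 1 < real (T n) / real n - ln (real n)) sequentially"
    using T_asymp by (rule order_tendstoD) simp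
  with eventually_ge_at_top[of 1]
  have "eventually (\<lambda>n. \<forall>k. norm (a k n) \<le> M k) sequentially"
    by eventually_elim (auto simp: a_def M_def intro!: coupon_term_abs_le)
  then have "eventually (\<lambda>(k, n). norm (a k n) \<le> M k) (sequentially \<times>\<^sub>F sequentially)"
    by (rule eventually_prod2[OF sequentially_bot, THEN iffD2, THEN eventually_mono]) auto
  moreover have "summable M"
    unfolding M_def using summable_exp[of "exp (1 - y)"] by (simp add: field_simps)
  ultimately have "(\<lambda>n. \<Sum>k. a k n) \<longlonglongrightarrow> (\<Sum>k. (- exp (- y)) ^ k / fact k)"
    using tannerys_theorem[OF a_lim, where M = M] by simp
  moreover have "(\<Sum>k. (- exp (- y)) ^ k / fact k) = exp (- exp (- y))"
    using exp_converges[of "- exp (- y)"] by (simp add: sums_iff field_simps)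
  moreover have "eventually (\<lambda>n. (\<Sum>k. a k n) = coupon_cdf n (T n)) sequentially"
    using eventually_ge_at_top[of 1]
  proof eventually_elim
    case (elim n)
    have "(\<Sum>k. a k n) = (\<Sum>k\<le>n. a k n)"
      by (rule suminf_finite) (auto simp: a_def binomial_eq_0)
    then show ?case
      using coupon_cdf_eq_sum[OF elim] by (simp add: a_def)
  qed
  ultimately show ?thesis
    by (auto dest: Lim_transform_eventually)
qed

end

lemma nat_floor_n_ln_n_asymp:
  "(\<lambda>n. real (nat \<lfloor>real n * ln (real n) + real n * y\<rfloor>) / real n - ln (real n)) \<longlonglongrightarrow> y"
proof (rule tendsto_sandwich[where f = "\<lambda>n. y - 1 / real n" and h = "\<lambda>_. y"])
  let ?t = "\<lambda>n. real (nat \<lfloor>real n * ln (real n) + real n * y\<rfloor>)"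
  have "eventually (\<lambda>n::nat. 0 \<le> real n * ln (real n) + real n * y) sequentially"
    by real_asymp
  with eventually_gt_at_top[of 0] have "eventually (\<lambda>n. y - 1 / real n \<le> ?t n / real n - ln (real n)
      \<and> ?t n / real n - ln (real n) \<le> y) sequentially"
  proof eventually_elim
    case (elim n)
    let ?x = "real n * ln (real n) + real n * y"
    have "?x - 1 \<le> ?t n" "?t n \<le> ?x"
      using elim by linarith+
    then have "(?x - 1) / real n \<le> ?t n / real n" "?t n / real n \<le> ?x / real n"
      using elim by (auto intro: divide_right_mono)
    moreover have "(?x - 1) / real n = ln (real n) + y - 1 / real n" "?x / real n = ln (real n) + y"
      using elim by (simp_all add: field_simps)
    ultimately show ?case by argo
  qed
  then show "eventually (\<lambda>n. y - 1 / real n \<le> ?t n / real n - ln (real n)) sequentially"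
    and "eventually (\<lambda>n. ?t n / real n - ln (real n) \<le> y) sequentially"
    by (auto elim: eventually_mono)
  show "(\<lambda>n. y - 1 / real n) \<longlonglongrightarrow> y"
    by real_asymp
qed simp

lemma rate_times_time_tendsto_zero:
  fixes r :: "nat \<Rightarrow> real" and t :: "nat \<Rightarrow> nat"
  assumes r_nonneg: "\<And>n. 0 \<le> r n" and r_lim: "(\<lambda>n. r n * real n * ln (real n)) \<longlonglongrightarrow> 0"
    and t_asymp: "(\<lambda>n. real (t n) / real n - ln (real n)) \<longlonglongrightarrow> y"
  shows "(\<lambda>n. r n * real (t n)) \<longlonglongrightarrow> 0"
proof -
  have "eventually (\<lambda>n::nat. 1 \<le> ln (real n)) sequentially"
    by real_asymp
  then have le_ln: "eventually (\<lambda>n. r n * real n \<le> r n * real n * ln (real n)) sequentially"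
  proof (rule eventually_mono)
    fix n :: nat
    assume "1 \<le> ln (real n)"
    then show "r n * real n \<le> r n * real n * ln (real n)"
      using mult_left_mono[of 1 "ln (real n)" "r n * real n"] r_nonneg[of n] by simp
  qed
  have rn: "(\<lambda>n. r n * real n) \<longlonglongrightarrow> 0"
  proof (rule tendsto_sandwich[where f = "\<lambda>_. 0" and h = "\<lambda>n. r n * real n * ln (real n)"])
    show "eventually (\<lambda>n. 0 \<le> r n * real n) sequentially"
      using r_nonneg by (intro always_eventually allI) simp
  qed (use le_ln r_lim in simp_all)
  have "(\<lambda>n. r n * real n * ln (real n) + r n * real n * (real (t n) / real n - ln (real n)))
      \<longlonglongrightarrow> 0 + 0 * y"
    by (rule tendsto_add[OF r_lim tendsto_mult[OF rn t_asymp]])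
  moreover have "eventually (\<lambda>n. r n * real n * ln (real n)
      + r n * real n * (real (t n) / real n - ln (real n)) = r n * real (t n)) sequentially"
    using eventually_gt_at_top[of 0] by eventually_elim (simp add: field_simps)
  ultimately show ?thesis
    by (auto dest: Lim_transform_eventually)
qed

lemma one_minus_power_tendsto_one:
  fixes r :: "nat \<Rightarrow> real" and t :: "nat \<Rightarrow> nat"
  assumes "\<And>n. 0 \<le> r n" "\<And>n. r n \<le> 1" and "(\<lambda>n. r n * real (t n)) \<longlonglongrightarrow> 0"
  shows "(\<lambda>n. (1 - r n) ^ t n) \<longlonglongrightarrow> 1"
proof (rule tendsto_sandwich[where f = "\<lambda>n. 1 - r n * real (t n)" and h = "\<lambda>_. 1"])
  have "1 - r n * real (t n) \<le> (1 - r n) ^ t n" for n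
    using Bernoulli_inequality[of "- r n" "t n"] assms(2)[of n] by (simp add: algebra_simps)
  then show "eventually (\<lambda>n. 1 - r n * real (t n) \<le> (1 - r n) ^ t n) sequentially"
    by (intro always_eventually allI)
  show "eventually (\<lambda>n. (1 - r n) ^ t n \<le> 1) sequentially"
    using assms(1,2) by (intro always_eventually allI power_le_one) auto
  show "(\<lambda>n. 1 - r n * real (t n)) \<longlonglongrightarrow> 1"
    using tendsto_diff[OF tendsto_const assms(3), of 1] by simp
qed simp

lemma reset_cdf_tendsto:
  fixes rho :: "nat \<Rightarrow> real" and t :: "nat \<Rightarrow> nat"
  assumes rho: "\<And>n. 0 \<le> rho n" "\<And>n. rho n \<le> 1"
    and no_reset: "(\<lambda>n. (1 - rho n) ^ t n) \<longlonglongrightarrow> 1"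
    and classical: "(\<lambda>n. coupon_cdf n (t n)) \<longlonglongrightarrow> L"
  shows "(\<lambda>n. reset_cdf n (rho n) (\<lambda>i. (1 - rho n) / real n) (t n)) \<longlonglongrightarrow> L"
proof -
  define q where "q n = (1 - rho n) ^ t n" for n
  let ?R = "\<lambda>n. reset_cdf n (rho n) (\<lambda>i. (1 - rho n) / real n) (t n)"
  show ?thesis
  proof (rule tendsto_sandwich[where f = "\<lambda>n. q n * coupon_cdf n (t n)"
        and h = "\<lambda>n. q n * coupon_cdf n (t n) + (1 - q n)"])
    have "eventually (\<lambda>n. q n * coupon_cdf n (t n) \<le> ?R n
        \<and> ?R n \<le> q n * coupon_cdf n (t n) + (1 - q n)) sequentially"
      using eventually_ge_at_top[of 1]
    proof eventually_elim
      case (elim n)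
      show ?case
        unfolding q_def using reset_cdf_bounds[OF elim rho(1)[of n] rho(2)[of n]] by simp
    qed
    then show "eventually (\<lambda>n. q n * coupon_cdf n (t n) \<le> ?R n) sequentially"
      and "eventually (\<lambda>n. ?R n \<le> q n * coupon_cdf n (t n) + (1 - q n)) sequentially"
      by (auto elim: eventually_mono)
    have "(\<lambda>n. q n * coupon_cdf n (t n)) \<longlonglongrightarrow> 1 * L"
      unfolding q_def by (intro tendsto_mult no_reset classical)
    then show "(\<lambda>n. q n * coupon_cdf n (t n)) \<longlonglongrightarrow> L"
      by simp
    have "(\<lambda>n. q n * coupon_cdf n (t n) + (1 - q n)) \<longlonglongrightarrow> 1 * L + (1 - 1)"
      unfolding q_def by (intro tendsto_add tendsto_diff tendsto_mult tendsto_const no_reset classical)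
    then show "(\<lambda>n. q n * coupon_cdf n (t n) + (1 - q n)) \<longlonglongrightarrow> L"
      by simp
  qed
qed

theorem mainTheorem11:
  fixes rho :: "nat \<Rightarrow> real"
  assumes "\<And>n. 0 < rho n \<and> rho n < 1"
    and "(\<lambda>n. rho n * real n * ln (real n)) \<longlonglongrightarrow> 0"
  shows "\<forall>y::real. (\<lambda>n. reset_cdf n (rho n) (\<lambda>i. (1 - rho n) / real n)
            (nat \<lfloor>real n * ln (real n) + real n * y\<rfloor>))
          \<longlonglongrightarrow> exp (- exp (- y))"
proof
  fix y :: real
  define t where "t n = nat \<lfloor>real n * ln (real n) + real n * y\<rfloor>" for n
  have rho: "0 \<le> rho n" "rho n \<le> 1" for n
    using assms(1)[of n] by auto
  have t_asymp: "(\<lambda>n. real (t n) / real n - ln (real n)) \<longlonglongrightarrow> y"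
    unfolding t_def by (rule nat_floor_n_ln_n_asymp)
  have "(\<lambda>n. (1 - rho n) ^ t n) \<longlonglongrightarrow> 1"
    using rho rate_times_time_tendsto_zero[OF _ assms(2) t_asymp]
    by (intro one_minus_power_tendsto_one) auto
  then have "(\<lambda>n. reset_cdf n (rho n) (\<lambda>i. (1 - rho n) / real n) (t n)) \<longlonglongrightarrow> exp (- exp (- y))"
    by (rule reset_cdf_tendsto[OF rho _ coupon_cdf_tendsto_gumbel[OF t_asymp]])
  then show "(\<lambda>n. reset_cdf n (rho n) (\<lambda>i. (1 - rho n) / real n)
      (nat \<lfloor>real n * ln (real n) + real n * y\<rfloor>)) \<longlonglongrightarrow> exp (- exp (- y))"
    unfolding t_def .
qed

end
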